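(* With $\mathrm X$, $h$, $R$, $(\mathrm U_k)$ and $R_k$ as follows, the inductive limit topology on $R=\bigcup_k R_k$ (a set $W\subseteq R$ is open iff $W\cap R_k$ is open in $R_k$ for all $k$, each $R_k$ carrying the subspace topology from $\mathbb Z\times\mathrm X\times\mathbb Z\times\mathrm X$) coincides with the subspace topology on $R$ from the product topology of $\mathbb Z\times\mathrm X\times\mathbb Z\times\mathrm X$. Here: $\mathrm X$ is the Cantor set, $\mathrm U,\mathrm V\subseteq\mathrm X$ open with $\mathrm U\neq\mathrm X$, $h:\mathrm U\to\mathrm V$ a homeomorphism, $\mathrm X_{-n}=\mathrm{dom}(h^n)$, $R=\{(r,x,s,y): x\in\mathrm X_{s-r},\ h^{r-s}(x)=y\}$; $(\mathrm U_k)_{k\ge0}$ is an increasing sequence of clopen sets with union $\mathrm U$, $\mathrm X^k_{-n}=\mathrm{dom}((h|_{\mathrm U_k})^n)$, and $R_k=\{(r,x,s,y): x\in\mathrm X^k_{s-r},\ h^{r-s}(x)=y\}$.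
   Context: $\mathbb Z$ is discrete. $\mathrm{dom}(h^n)$ denotes the domain of the $n$-fold composition of the partial bijection $h$ (for $n<0$, of $(h^{-1})^{|n|}$; $\mathrm{dom}(h^0)=\mathrm X$). It holds that $R_k\subseteq R_{k+1}$ and $R=\bigcup_kR_k$. *)

theory Defs
  imports "HOL-Analysis.Analysis"
begin

definition cantor_top :: "(nat \<Rightarrow> bool) topology" where
  "cantor_top = product_topology (\<lambda>_. discrete_topology (UNIV :: bool set)) UNIV"

definition int_top :: "int topology" where
  "int_top = discrete_topology UNIV"

definition ZXZX_top :: "(int \<times> (nat \<Rightarrow> bool) \<times> int \<times> (nat \<Rightarrow> bool)) topology" where
  "ZXZX_top = prod_topology int_top (prod_topology cantor_top (prod_topology int_top cantor_top))"

text \<open>Domain of the n-fold composition of the partial map f with domain A (n natural).\<close>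
definition pdom :: "('a \<Rightarrow> 'a) \<Rightarrow> 'a set \<Rightarrow> nat \<Rightarrow> 'a set" where
  "pdom f A n = {x. \<forall>i<n. (f ^^ i) x \<in> A}"

text \<open>For the partial bijection h : U \<rightarrow> h`U: domain of h^m, m an integer
  (for m < 0 the |m|-fold power of the inverse h^{-1} : h`U \<rightarrow> U).\<close>
definition zdom :: "('a \<Rightarrow> 'a) \<Rightarrow> 'a set \<Rightarrow> int \<Rightarrow> 'a set" where
  "zdom h U m = (if 0 \<le> m then pdom h U (nat m) else pdom (inv_into U h) (h ` U) (nat (- m)))"

text \<open>Value of h^m (meaningful on zdom h U m).\<close>
definition zpow :: "('a \<Rightarrow> 'a) \<Rightarrow> 'a set \<Rightarrow> int \<Rightarrow> 'a \<Rightarrow> 'a" where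
  "zpow h U m x = (if 0 \<le> m then (h ^^ nat m) x else (inv_into U h ^^ nat (- m)) x)"

definition Rrel :: "('a \<Rightarrow> 'a) \<Rightarrow> 'a set \<Rightarrow> (int \<times> 'a \<times> int \<times> 'a) set" where
  "Rrel h U = {(r, x, s, y). x \<in> zdom h U (r - s) \<and> zpow h U (r - s) x = y}"

end

theory Submission
  imports Defs
begin

(*
  Write R = Rrel h U and R_k = Rrel h (Uk k).  The inductive limit topology
  on R agrees with the subspace topology as soon as
    (a) every R_k is open in the subspace R, and
    (b) R is the union of the R_k;
  this is a purely topological fact about open covers (subtopology_eq_limit_of_open_cover).

  For (a), R_k is cut out of R by the set of (r,x,s,y) with x in dom((h|U_k)^(r-s)),
  since on that domain h|U_k and h have the same powers.  These domains are open:
  positive powers of h|U_k are continuous on the open set U_k, negative powers are powers of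
  the continuous inverse on the open set h(U_k).  For (b), a point x in dom(h^m) needs only
  finitely many iterates to lie in U (resp. h(U)), and these all lie in one U_k because the
  U_k increase.
*)


lemma pdom_Suc: "x \<in> pdom f B (Suc n) \<longleftrightarrow> x \<in> B \<and> f x \<in> pdom f B n"
  unfolding pdom_def by (auto simp: less_Suc_eq_0_disj funpow_Suc_right simp del: funpow.simps)

lemma pdom_mono: "B \<subseteq> C \<Longrightarrow> pdom f B n \<subseteq> pdom f C n"
  unfolding pdom_def by blast

lemma pdom_cong:
  assumes "\<And>z. z \<in> B \<Longrightarrow> f z = g z"
  shows "pdom f B n = pdom g B n"
proof (induction n)
  case (Suc n)
  show ?case using Suc assms by (auto simp: pdom_Suc set_eq_iff)
qed (simp add: pdom_def)

lemma funpow_cong_pdom: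
  assumes "\<And>z. z \<in> B \<Longrightarrow> f z = g z" "x \<in> pdom f B n" "i \<le> n"
  shows "(f ^^ i) x = (g ^^ i) x"
  using assms(3)
proof (induction i)
  case (Suc i)
  then have "(f ^^ i) x \<in> B" using assms(2) Suc_le_lessD unfolding pdom_def by blast
  then show ?case using Suc assms(1) by simp
qed simp

(* Finitely many iterates lying in an increasing union already lie in a single member. *)
lemma pdom_Union_chain:
  assumes "incseq B"
  shows "pdom f (\<Union>k. B k) n = (\<Union>k. pdom f (B k) n)"
proof (induction n arbitrary: f)
  case 0 then show ?case by (simp add: pdom_def)
next
  case (Suc n)
  show ?case
  proof (intro equalityI subsetI)
    fix x assume "x \<in> pdom f (\<Union>k. B k) (Suc n)"
    then obtain k1 k2 where "x \<in> B k1" "f x \<in> pdom f (B k2) n"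
      using Suc by (auto simp: pdom_Suc)
    then have "x \<in> B (max k1 k2)" "f x \<in> pdom f (B (max k1 k2)) n"
      using monoD[OF assms] pdom_mono by (metis max.cobounded1 max.cobounded2 subsetD)+
    then show "x \<in> (\<Union>k. pdom f (B k) (Suc n))" by (auto simp: pdom_Suc)
  next
    fix x assume "x \<in> (\<Union>k. pdom f (B k) (Suc n))"
    then show "x \<in> pdom f (\<Union>k. B k) (Suc n)" using pdom_mono[of "B _" "\<Union>k. B k"] by blast
  qed
qed

lemma inv_into_subset_eq:
  assumes "inj_on h U" "A \<subseteq> U" "y \<in> h ` A"
  shows "inv_into A h y = inv_into U h y"
  using assms by (metis imageE inv_into_f_f inj_on_subset subsetD)

lemma zdom_via_ambient:
  assumes "inj_on h U" "A \<subseteq> U"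
  shows "zdom h A m =
    (if 0 \<le> m then pdom h A (nat m) else pdom (inv_into U h) (h ` A) (nat (- m)))"
  using pdom_cong[OF inv_into_subset_eq[OF assms]] by (simp add: zdom_def)

lemma zpow_via_ambient:
  assumes "inj_on h U" "A \<subseteq> U" "x \<in> zdom h A m"
  shows "zpow h A m x = zpow h U m x"
proof (cases "0 \<le> m")
  case False
  then show ?thesis
    using funpow_cong_pdom[OF inv_into_subset_eq[OF assms(1,2)],
        where x=x and n="nat (- m)" and i="nat (- m)"] assms(3)
    by (simp add: zdom_def zpow_def)
qed (simp add: zpow_def)

lemma zdom_mono:
  assumes "inj_on h U" "A \<subseteq> U"
  shows "zdom h A m \<subseteq> zdom h U m"
  unfolding zdom_via_ambient[OF assms] zdom_via_ambient[OF assms(1) subset_refl]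
  using pdom_mono[OF assms(2)] pdom_mono[OF image_mono[OF assms(2), of h]] by simp

lemma zdom_Union_chain:
  assumes "incseq A" "inj_on h (\<Union>k. A k)"
  shows "zdom h (\<Union>k. A k) m = (\<Union>k. zdom h (A k) m)"
proof -
  have sub: "A k \<subseteq> (\<Union>k. A k)" for k by blast
  have "incseq (\<lambda>k. h ` A k)" using assms(1) by (simp add: incseq_def image_mono)
  then show ?thesis
    using zdom_via_ambient[OF assms(2) sub] zdom_via_ambient[OF assms(2) subset_refl]
      pdom_Union_chain[OF assms(1)] pdom_Union_chain[of "\<lambda>k. h ` A k"]
    by (simp add: image_UN)
qed

lemma Rrel_restrict:
  assumes "inj_on h U" "A \<subseteq> U"
  shows "Rrel h A = {(r, x, s, y). x \<in> zdom h A (r - s)} \<inter> Rrel h U"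
  using zdom_mono[OF assms] zpow_via_ambient[OF assms] unfolding Rrel_def by auto

lemma Rrel_Union_chain:
  assumes "incseq A" "inj_on h (\<Union>k. A k)"
  shows "Rrel h (\<Union>k. A k) = (\<Union>k. Rrel h (A k))"
proof -
  have sub: "A k \<subseteq> (\<Union>k. A k)" for k by blast
  show ?thesis
    unfolding Rrel_restrict[OF assms(2) sub] using zdom_Union_chain[OF assms, symmetric]
    by (auto simp: Rrel_def)
qed

lemma pdom_openin:
  assumes "topspace T = UNIV" "openin T B" "continuous_map (subtopology T B) T f"
  shows "openin T (pdom f B n)"
proof (induction n)
  case 0
  show ?case using assms(1) openin_topspace[of T] by (simp add: pdom_def)
next
  case (Suc n)
  have "pdom f B (Suc n) = {x \<in> topspace (subtopology T B). f x \<in> pdom f B n}"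
    using assms(1) by (auto simp: pdom_Suc)
  then show ?case
    using openin_continuous_map_preimage[OF assms(3) Suc] assms(2) openin_trans_full by metis
qed

lemma homeomorphic_map_inv_into_continuous:
  assumes "homeomorphic_map X Y f"
  shows "continuous_map Y X (inv_into (topspace X) f)"
proof -
  obtain g where g: "homeomorphic_maps X Y f g"
    using assms homeomorphic_map_maps by blast
  have "g y = inv_into (topspace X) f y" if "y \<in> topspace Y" for y
  proof -
    have "g y \<in> topspace X" "f (g y) = y"
      using g that unfolding homeomorphic_maps_def continuous_map_def by auto
    then show ?thesis
      using homeomorphic_imp_injective_map[OF assms] by (metis inv_into_f_f)
  qed
  then show ?thesis
    using continuous_map_eq g unfolding homeomorphic_maps_def by blast
qed

lemma zdom_openin:
  assumes "topspace T = UNIV" "openin T A" "openin T (h ` A)"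
    and "homeomorphic_map (subtopology T A) (subtopology T (h ` A)) h"
  shows "openin T (zdom h A m)"
proof -
  have "continuous_map (subtopology T A) T h"
    using homeomorphic_imp_continuous_map[OF assms(4)] continuous_map_into_fulltopology by blast
  moreover have "continuous_map (subtopology T (h ` A)) T (inv_into A h)"
    using homeomorphic_map_inv_into_continuous[OF assms(4)] assms(1)
      continuous_map_into_fulltopology by fastforce
  ultimately show ?thesis
    using pdom_openin[OF assms(1,2)] pdom_openin[OF assms(1,3)] by (simp add: zdom_def)
qed

lemma homeomorphic_map_restrict_openin:
  assumes "homeomorphic_map (subtopology T U) (subtopology T V) h" "openin T V"
    and "openin T A" "A \<subseteq> U"
  shows "openin T (h ` A) \<and> homeomorphic_map (subtopology T A) (subtopology T (h ` A)) h"
proof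
  have "openin (subtopology T U) A"
    using assms(3,4) by (metis openin_subtopology inf.absorb1)
  then have "openin (subtopology T V) (h ` A)"
    using homeomorphic_imp_open_map[OF assms(1)] unfolding open_map_def by blast
  then show "openin T (h ` A)" using assms(2) openin_trans_full by blast
next
  have "A \<subseteq> topspace (subtopology T U)"
    using assms(3,4) openin_subset by fastforce
  moreover have "h ` topspace (subtopology T U) = topspace (subtopology T V)"
    using homeomorphic_imp_surjective_map[OF assms(1)] .
  ultimately have "h ` (topspace (subtopology T U) \<inter> A) = topspace (subtopology T V) \<inter> h ` A"
    by blast
  then have "homeomorphic_map (subtopology (subtopology T U) A)
      (subtopology (subtopology T V) (h ` A)) h"
    using homeomorphic_map_subtopologies[OF assms(1)] by blast
  moreover have "h ` A \<subseteq> V"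
    using \<open>h ` topspace (subtopology T U) = topspace (subtopology T V)\<close> assms(3,4)
      openin_subset by fastforce
  ultimately show "homeomorphic_map (subtopology T A) (subtopology T (h ` A)) h"
    using assms(4) by (simp add: subtopology_subtopology Int_absorb1)
qed

(* A condition "x in Z(r-s)" with all Z(m) open defines an open subset of Z x X x Z x X,
   since the integer coordinates carry the discrete topology. *)
lemma openin_ZXZX_slices:
  assumes "\<And>m. openin cantor_top (Z m)"
  shows "openin ZXZX_top {(r, x, s, y :: nat \<Rightarrow> bool). x \<in> Z (r - s)}" (is "openin _ ?S")
proof (subst openin_subopen, intro ballI)
  fix p assume p: "p \<in> ?S"
  obtain r x s y where pe: "p = (r, x, s, y)" by (cases p) auto
  let ?box = "{r} \<times> Z (r - s) \<times> {s} \<times> topspace cantor_top"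
  have "openin ZXZX_top ?box"
    unfolding ZXZX_top_def int_top_def by (simp add: openin_prod_Times_iff assms)
  moreover have "p \<in> ?box" "?box \<subseteq> ?S"
    using p pe by (auto simp: cantor_top_def)
  ultimately show "\<exists>T. openin ZXZX_top T \<and> p \<in> T \<and> T \<subseteq> ?S" by blast
qed

lemma subtopology_eq_limit_of_open_cover:
  assumes "\<And>k. openin (subtopology T R) (C k)" "R = (\<Union>k. C k)" "W \<subseteq> R"
  shows "(\<forall>k. openin (subtopology T (C k)) (W \<inter> C k)) \<longleftrightarrow> openin (subtopology T R) W"
proof
  assume pieces: "\<forall>k. openin (subtopology T (C k)) (W \<inter> C k)"
  have "openin (subtopology T R) (W \<inter> C k)" for k
  proof (rule openin_trans_full[OF _ assms(1)])
    have "C k \<subseteq> R" using assms(2) by blast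
    then show "openin (subtopology (subtopology T R) (C k)) (W \<inter> C k)"
      using pieces by (simp add: subtopology_subtopology Int_absorb1)
  qed
  then have "openin (subtopology T R) (\<Union>k. W \<inter> C k)" by blast
  moreover have "W = (\<Union>k. W \<inter> C k)" using assms(2,3) by blast
  ultimately show "openin (subtopology T R) W" by simp
next
  assume "openin (subtopology T R) W"
  then obtain S where "openin T S" "W = S \<inter> R" unfolding openin_subtopology by blast
  moreover have "W \<inter> C k = S \<inter> C k" for k using calculation(2) assms(2) by blast
  ultimately show "\<forall>k. openin (subtopology T (C k)) (W \<inter> C k)"
    unfolding openin_subtopology by blast
qed

theorem mainTheorem9:
  fixes U V :: "(nat \<Rightarrow> bool) set"
    and h :: "(nat \<Rightarrow> bool) \<Rightarrow> (nat \<Rightarrow> bool)"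
    and Uk :: "nat \<Rightarrow> (nat \<Rightarrow> bool) set"
  assumes "openin cantor_top U" and "openin cantor_top V" and "U \<noteq> UNIV"
    and "homeomorphic_map (subtopology cantor_top U) (subtopology cantor_top V) h"
    and "\<And>k. closedin cantor_top (Uk k) \<and> openin cantor_top (Uk k)"
    and "\<And>k. Uk k \<subseteq> Uk (Suc k)"
    and "(\<Union>k. Uk k) = U"
  shows "\<forall>W \<subseteq> Rrel h U.
           (\<forall>k. openin (subtopology ZXZX_top (Rrel h (Uk k))) (W \<inter> Rrel h (Uk k)))
           \<longleftrightarrow> openin (subtopology ZXZX_top (Rrel h U)) W"
proof (intro allI impI subtopology_eq_limit_of_open_cover)
  have top: "topspace cantor_top = UNIV" by (simp add: cantor_top_def)
  have chain: "incseq Uk" using assms(6) by (simp add: incseq_SucI)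
  have inj: "inj_on h U"
    using homeomorphic_imp_injective_map[OF assms(4)] top by simp
  have Uk_U: "Uk k \<subseteq> U" for k using assms(7) by blast
  have "openin cantor_top (zdom h (Uk k) m)" for k m
  proof -
    have "openin cantor_top (Uk k)" using assms(5) by blast
    then show ?thesis
      using homeomorphic_map_restrict_openin[OF assms(4,2) _ Uk_U] zdom_openin[OF top] by blast
  qed
  then have "openin ZXZX_top {(r, x, s, y). x \<in> zdom h (Uk k) (r - s)}" for k
    by (rule openin_ZXZX_slices)
  then show "openin (subtopology ZXZX_top (Rrel h U)) (Rrel h (Uk k))" for k
    unfolding Rrel_restrict[OF inj Uk_U] by (rule openin_subtopology_Int)
  show "Rrel h U = (\<Union>k. Rrel h (Uk k))"
    using Rrel_Union_chain[OF chain] inj by (simp add: assms(7))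
qed

end
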